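(* Let $N\ge 0$, $k\ge1$ be integers and $f:\{0,\dots,N\}^k\to\{\mathbf{true},\mathbf{false}\}$ a feasibility function. Then $\textsc{ParetoEnumerate}(N,k,f)$ (with arbitrary choices of the picked element in each iteration) terminates, and at the end of its main loop the set $P$ it returns is exactly the set of all Pareto points of $f$.
   Context: For $\vec x,\vec x'\in\{0,\dots,N\}^k$, $\vec x\le_k\vec x'$ iff $x_i\le x'_i$ for all $i$; $\vec x$ is smaller than $\vec x'$ (and $\vec x'$ greater than $\vec x$) if $\vec x\le_k\vec x'$ and $\vec x\neq\vec x'$. A feasibility function is a monotone $f:\{0,\dots,N\}^k\to\{\mathbf{true},\mathbf{false}\}$: if $f(\vec x)=\mathbf{true}$ then $f(\vec x')=\mathbf{true}$ for all $\vec x'$ greater than $\vec x$. A Pareto point of $f$ is an $\vec x$ with $f(\vec x)=\mathbf{true}$ and $f(\vec x')=\mathbf{false}$ for all $\vec x'$ smaller than $\vec x$. Procedure $\textsc{SearchParetoPoint}(\vec x,k,f)$: for $i=1,\dots,k$: set $\mathit{max}:=x_i+1$, $\mathit{min}:=0$; while $\mathit{max}-\mathit{min}>1$: $\mathit{mid}:=\mathit{min}+\lfloor(\mathit{max}-\mathit{min}-1)/2\rfloor$, $x_i:=\mathit{mid}$, and if $f(\vec x)=\mathbf{true}$ then $\mathit{max}:=\mathit{mid}+1$ else $\mathit{min}:=\mathit{mid}+1$; then $x_i:=\mathit{min}$. Return $\vec x$. Procedure $\textsc{ParetoEnumerate}(N,k,f)$: initialize $S:=\{(N,\dots,N)\}$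 and $P:=\emptyset$. Main loop: while $S\neq\emptyset$: pick (without removing) some $\vec x\in S$; if $f(\vec x)=\mathbf{true}$, then set $\vec x:=\textsc{SearchParetoPoint}(\vec x,k,f)$, set $P:=P\cup\{\vec x\}$, set $S':=\emptyset$, and for each $\vec y\in S$: if not $\vec x\le_k\vec y$, add $\vec y$ to $S'$; otherwise, for each $i\in\{1,\dots,k\}$ with $x_i>0$, add $(y_1,\dots,y_{i-1},x_i-1,y_{i+1},\dots,y_k)$ to $S'$; then set $S$ to the set of elements of $S'$ that are not smaller than any other element of $S'$. Otherwise (if $f(\vec x)=\mathbf{false}$), set $S:=S\setminus\{\vec x\}$. When the loop ends, return $P$. *)

theory Defs
  imports Main
begin

text \<open>Vectors in {0..N}^k are represented as lists of length k with entries \<le> N;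
  coordinate i (1-based in the paper) is list index i-1.\<close>

definition vecs :: "nat \<Rightarrow> nat \<Rightarrow> nat list set" where
  "vecs N k = {x. length x = k \<and> (\<forall>i<k. x ! i \<le> N)}"

definition vle :: "nat list \<Rightarrow> nat list \<Rightarrow> bool" where
  "vle x y \<longleftrightarrow> list_all2 (\<le>) x y"

definition smaller :: "nat list \<Rightarrow> nat list \<Rightarrow> bool" where
  "smaller x y \<longleftrightarrow> vle x y \<and> x \<noteq> y"

definition feasibility :: "nat \<Rightarrow> nat \<Rightarrow> (nat list \<Rightarrow> bool) \<Rightarrow> bool" where
  "feasibility N k f \<longleftrightarrow>
     (\<forall>x\<in>vecs N k. \<forall>x'\<in>vecs N k. f x \<and> smaller x x' \<longrightarrow> f x')"

definition pareto_points :: "nat \<Rightarrow> nat \<Rightarrow> (nat list \<Rightarrow> bool) \<Rightarrow> nat list set" where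
  "pareto_points N k f =
     {x\<in>vecs N k. f x \<and> (\<forall>x'\<in>vecs N k. smaller x' x \<longrightarrow> \<not> f x')}"

text \<open>Binary search for coordinate i (the inner while loop of SearchParetoPoint);
  returns the final value of min.\<close>
function bsearch :: "(nat list \<Rightarrow> bool) \<Rightarrow> nat list \<Rightarrow> nat \<Rightarrow> nat \<Rightarrow> nat \<Rightarrow> nat" where
  "bsearch f x i mn mx =
     (if mx - mn > 1 then
        (let mid = mn + (mx - mn - 1) div 2 in
         if f (x[i := mid]) then bsearch f x i mn (mid + 1)
         else bsearch f x i (mid + 1) mx)
      else mn)"
  by pat_completeness auto
termination
  by (relation "measure (\<lambda>(f, x, i, mn, mx). mx - mn)") auto

definition search_step :: "(nat list \<Rightarrow> bool) \<Rightarrow> nat list \<Rightarrow> nat \<Rightarrow> nat list" where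
  "search_step f x i = x[i := bsearch f x i 0 (x ! i + 1)]"

definition search_pareto_point :: "nat list \<Rightarrow> nat \<Rightarrow> (nat list \<Rightarrow> bool) \<Rightarrow> nat list" where
  "search_pareto_point x k f = foldl (search_step f) x [0..<k]"

definition update_S :: "nat \<Rightarrow> nat list \<Rightarrow> nat list set \<Rightarrow> nat list set" where
  "update_S k x S =
     (let S' = {y\<in>S. \<not> vle x y}
               \<union> {y[i := x ! i - 1] | y i. y \<in> S \<and> vle x y \<and> i < k \<and> x ! i > 0}
      in {y\<in>S'. \<not> (\<exists>z\<in>S'. smaller y z)})"

text \<open>One iteration of the main loop of ParetoEnumerate, on states (S, P), with an
  arbitrary choice of the picked element x \<in> S.\<close>
definition pe_step :: "nat \<Rightarrow> (nat list \<Rightarrow> bool) \<Rightarrow>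
    nat list set \<times> nat list set \<Rightarrow> nat list set \<times> nat list set \<Rightarrow> bool" where
  "pe_step k f st st' \<longleftrightarrow>
     (\<exists>x\<in>fst st.
        (f x \<and> (let x' = search_pareto_point x k f in
                   st' = (update_S k x' (fst st), insert x' (snd st))))
      \<or> (\<not> f x \<and> st' = (fst st - {x}, snd st)))"

definition pe_init :: "nat \<Rightarrow> nat \<Rightarrow> nat list set \<times> nat list set" where
  "pe_init N k = ({replicate k N}, {})"

end

theory Submission
  imports Defs
begin

text \<open>
  Throughout the main loop the state (S, P) satisfies: S consists of vectors, P of Pareto points,
  no found point is below an element of S, and every feasible vector lies above a found point or
  below an element of S. The point returned by the binary searches is a Pareto point, because each
  of its coordinates is minimal given the others, and by monotonicity this local minimality is
  global. Each iteration either finds a new Pareto point or shrinks S (the pruned S always fits in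
  {0..N}^k), so the loop terminates; when S is empty, coverage forces every Pareto point to lie
  above, hence to equal, a found one.
\<close>

lemma no_infinite_chain_if_measure_decreases:
  fixes m :: "'a \<Rightarrow> nat"
  assumes step: "\<And>s t. I s \<Longrightarrow> R s t \<Longrightarrow> I t \<and> m t < m s"
    and "I (r 0)" and chain: "\<forall>n. R (r n) (r (Suc n))"
  shows False
proof -
  have "I (r n) \<and> m (r n) + n \<le> m (r 0)" for n
  proof (induction n)
    case (Suc n)
    then show ?case using step[of "r n" "r (Suc n)"] chain by fastforce
  qed (use assms(2) in simp)
  from this[of "Suc (m (r 0))"] show False by simp
qed

lemma reachable_invariant:
  assumes "\<And>s t. I s \<Longrightarrow> R s t \<Longrightarrow> I t" "I s" "R\<^sup>*\<^sup>* s t"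
  shows "I t"
  using assms(3,2) by induction (use assms(1) in blast)+

section \<open>The componentwise order\<close>

lemma vle_iff: "vle x y \<longleftrightarrow> length x = length y \<and> (\<forall>i<length x. x ! i \<le> y ! i)"
  by (simp add: vle_def list_all2_conv_all_nth)

lemma mem_vecs_iff: "x \<in> vecs N k \<longleftrightarrow> length x = k \<and> (\<forall>i<k. x ! i \<le> N)"
  by (simp add: vecs_def)

lemma vle_refl [simp]: "vle x x"
  by (simp add: vle_iff)

lemma vle_trans: "vle x y \<Longrightarrow> vle y z \<Longrightarrow> vle x z"
  unfolding vle_def using list_all2_trans[of "(\<le>)" "(\<le>)" "(\<le>)"] order_trans by blast

lemma vle_list_update: "vle x y \<Longrightarrow> v \<le> w \<Longrightarrow> vle (x[i := v]) (y[i := w])"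
  by (cases "i < length y") (auto simp: vle_iff nth_list_update)

lemma list_update_vle: "v \<le> y ! i \<Longrightarrow> vle (y[i := v]) y"
  by (cases "i < length y") (auto simp: vle_iff nth_list_update)

lemma list_update_mem_vecs: "x \<in> vecs N k \<Longrightarrow> v \<le> N \<Longrightarrow> x[i := v] \<in> vecs N k"
  by (cases "i < k") (auto simp: mem_vecs_iff nth_list_update)

lemma finite_vecs: "finite (vecs N k)"
proof (rule finite_subset)
  show "vecs N k \<subseteq> {xs. set xs \<subseteq> {0..N} \<and> length xs = k}"
    by (auto simp: mem_vecs_iff in_set_conv_nth)
  show "finite {xs. set xs \<subseteq> {0..N} \<and> length xs = k}"
    by (rule finite_lists_length_eq) simp
qed

lemma smaller_imp_sum_list_less:
  assumes "smaller x y"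
  shows "sum_list x < sum_list y"
proof -
  have len: "length x = length y" and le: "\<forall>i<length x. x ! i \<le> y ! i" and "x \<noteq> y"
    using assms by (auto simp: smaller_def vle_iff)
  then obtain j where j: "j < length x" "x ! j \<noteq> y ! j"
    by (auto simp: list_eq_iff_nth_eq)
  have "(\<Sum>i = 0..<length x. x ! i) < (\<Sum>i = 0..<length x. y ! i)"
    by (rule sum_strict_mono_ex1) (use le j in \<open>auto intro!: bexI[of _ j] simp: le_neq_implies_less\<close>)
  then show ?thesis
    using len by (simp add: sum_list_sum_nth)
qed

lemma finite_has_maximal_above:
  assumes "finite A" and "y \<in> A"
  shows "\<exists>z\<in>A. vle y z \<and> \<not> (\<exists>w\<in>A. smaller z w)"
proof -
  let ?B = "{z\<in>A. vle y z}"
  have fin: "finite (sum_list ` ?B)" and ne: "sum_list ` ?B \<noteq> {}"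
    using assms by simp_all (use vle_refl in blast)
  from Max_in[OF fin ne] obtain z where z: "z \<in> ?B" "Max (sum_list ` ?B) = sum_list z"
    by (rule imageE)
  have "\<not> smaller z w" if "w \<in> A" for w
  proof
    assume zw: "smaller z w"
    then have "w \<in> ?B"
      using z that vle_trans[of y z w] by (simp add: smaller_def)
    then have "sum_list w \<le> sum_list z"
      unfolding z(2)[symmetric] using fin by (intro Max_ge) auto
    with smaller_imp_sum_list_less[OF zw] show False by simp
  qed
  then show ?thesis
    using z by blast
qed

lemma feasibility_vle:
  assumes "feasibility N k f" "x \<in> vecs N k" "y \<in> vecs N k" "vle x y" "f x"
  shows "f y"
proof (cases "x = y")
  case False
  then show ?thesis
    using assms unfolding feasibility_def smaller_def by blast
qed (use assms in simp)

lemma feasibility_list_update: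
  assumes "feasibility N k f" "x \<in> vecs N k" "v \<le> w" "w \<le> N" "f (x[i := v])"
  shows "f (x[i := w])"
proof -
  have "x[i := v] \<in> vecs N k" "x[i := w] \<in> vecs N k"
    using assms(2-4) by (auto intro: list_update_mem_vecs)
  then show ?thesis
    using feasibility_vle[OF assms(1)] vle_list_update[OF vle_refl assms(3)] assms(5) by blast
qed

section \<open>The binary searches\<close>

declare bsearch.simps [simp del]

lemma bsearch_correct:
  assumes "feasibility N k f" "x \<in> vecs N k" "mn < mx" "mx - 1 \<le> N"
    and "f (x[i := mx - 1])" "\<forall>v<mn. \<not> f (x[i := v])"
  shows "bsearch f x i mn mx < mx \<and> f (x[i := bsearch f x i mn mx])
    \<and> (\<forall>v<bsearch f x i mn mx. \<not> f (x[i := v]))"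
  using assms
proof (induction f x i mn mx rule: bsearch.induct)
  case (1 f x i mn mx)
  note feas = "1.prems"(1,2)
  show ?case
  proof (cases "mx - mn > 1")
    case False
    then have "bsearch f x i mn mx = mn"
      by (subst bsearch.simps) simp
    moreover have "mn = mx - 1"
      using False "1.prems"(3) by linarith
    ultimately show ?thesis
      using "1.prems"(3-6) by simp
  next
    case True
    define mid where "mid = mn + (mx - mn - 1) div 2"
    have mid: "mn \<le> mid" "mid < mx - 1"
      using True unfolding mid_def by auto
    show ?thesis
    proof (cases "f (x[i := mid])")
      case fmid: True
      have "bsearch f x i mn mx = bsearch f x i mn (mid + 1)"
        using True fmid by (subst bsearch.simps) (simp add: Let_def mid_def)
      then show ?thesis
        using "1.IH"(1)[OF True mid_def fmid feas] "1.prems"(4,6) mid fmid by auto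
    next
      case fmid: False
      have "bsearch f x i mn mx = bsearch f x i (mid + 1) mx"
        using True fmid by (subst bsearch.simps) (simp add: Let_def mid_def)
      moreover have "\<forall>v<mid + 1. \<not> f (x[i := v])"
        using feasibility_list_update[OF feas, of _ mid i] fmid mid "1.prems"(4)
        by (auto simp: less_Suc_eq_le)
      ultimately show ?thesis
        using "1.IH"(2)[OF True mid_def fmid feas] "1.prems"(4,5) mid by simp
    qed
  qed
qed

definition coord_minimal :: "(nat list \<Rightarrow> bool) \<Rightarrow> nat list \<Rightarrow> nat \<Rightarrow> bool" where
  "coord_minimal f y j \<longleftrightarrow> (0 < y ! j \<longrightarrow> \<not> f (y[j := y ! j - 1]))"

lemma search_step_correct:
  assumes "feasibility N k f" "x \<in> vecs N k" "i < k" "f x"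
  shows "search_step f x i \<in> vecs N k" and "vle (search_step f x i) x"
    and "f (search_step f x i)" and "coord_minimal f (search_step f x i) i"
    and "\<And>j. j \<noteq> i \<Longrightarrow> search_step f x i ! j = x ! j"
proof -
  have len: "length x = k" and xi: "x ! i \<le> N"
    using assms(2,3) by (auto simp: mem_vecs_iff)
  define r where "r = bsearch f x i 0 (x ! i + 1)"
  have r: "r \<le> x ! i" "f (x[i := r])" "\<forall>v<r. \<not> f (x[i := v])"
    using bsearch_correct[OF assms(1,2), of 0 "x ! i + 1" i] assms(4) xi unfolding r_def by auto
  have "search_step f x i = x[i := r]"
    by (simp add: search_step_def r_def)
  then show "search_step f x i \<in> vecs N k" "vle (search_step f x i) x"
    "f (search_step f x i)" "coord_minimal f (search_step f x i) i"
    "\<And>j. j \<noteq> i \<Longrightarrow> search_step f x i ! j = x ! j"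
    using r len assms(3) xi
    by (auto simp: coord_minimal_def list_update_mem_vecs[OF assms(2)] list_update_vle)
qed

text \<open>A coordinate made minimal in an earlier round stays minimal after later rounds, since later
  rounds only decrease the other coordinates and f is monotone.\<close>

lemma foldl_search_step_correct:
  assumes feas: "feasibility N k f" and x: "x \<in> vecs N k" "f x" and "m \<le> k"
  shows "foldl (search_step f) x [0..<m] \<in> vecs N k
    \<and> vle (foldl (search_step f) x [0..<m]) x \<and> f (foldl (search_step f) x [0..<m])
    \<and> (\<forall>j<m. coord_minimal f (foldl (search_step f) x [0..<m]) j)"
  using \<open>m \<le> k\<close>
proof (induction m)
  case 0
  then show ?case using x by simp
next
  case (Suc m)
  define y where "y = foldl (search_step f) x [0..<m]"
  define y' where "y' = search_step f y m"
  have y: "y \<in> vecs N k" "vle y x" "f y" "\<forall>j<m. coord_minimal f y j"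
    using Suc unfolding y_def by auto
  have "m < k"
    using Suc.prems by simp
  note y' = search_step_correct[OF feas y(1) this y(3), folded y'_def]
  have "coord_minimal f y' j" if "j < m" for j
  proof -
    have eq: "y' ! j = y ! j"
      using y'(5) that by simp
    have "j < k"
      using that Suc.prems by simp
    then have "y ! j - 1 \<le> N"
      using y(1) by (auto simp: mem_vecs_iff)
    then have "y'[j := y ! j - 1] \<in> vecs N k" "y[j := y ! j - 1] \<in> vecs N k"
      using list_update_mem_vecs y(1) y'(1) by blast+
    moreover have "vle (y'[j := y ! j - 1]) (y[j := y ! j - 1])"
      using vle_list_update[OF y'(2) order_refl] .
    ultimately have "f (y'[j := y ! j - 1]) \<Longrightarrow> f (y[j := y ! j - 1])"
      using feasibility_vle[OF feas] by blast
    then show ?thesis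
      using y(4) that eq by (auto simp: coord_minimal_def)
  qed
  then show ?case
    using y' y Suc.prems vle_trans less_Suc_eq unfolding y'_def y_def by auto
qed

lemma coord_minimal_imp_pareto_point:
  assumes feas: "feasibility N k f" and y: "y \<in> vecs N k" "f y"
    and min: "\<forall>j<k. coord_minimal f y j"
  shows "y \<in> pareto_points N k f"
  unfolding pareto_points_def
proof (intro CollectI conjI ballI impI y notI)
  fix x assume x: "x \<in> vecs N k" "smaller x y" "f x"
  have len: "length x = k" "length y = k" and le: "\<forall>i<k. x ! i \<le> y ! i"
    using x y by (auto simp: mem_vecs_iff smaller_def vle_iff)
  obtain j where j: "j < k" "x ! j < y ! j"
    using x(2) len le by (auto simp: smaller_def list_eq_iff_nth_eq le_neq_implies_less)
  have "vle x (y[j := y ! j - 1])"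
    using len le j by (auto simp: vle_iff nth_list_update)
  moreover have "y[j := y ! j - 1] \<in> vecs N k"
    using y(1) j by (intro list_update_mem_vecs) (auto simp: mem_vecs_iff)
  ultimately have "f (y[j := y ! j - 1])"
    using feasibility_vle[OF feas x(1)] x(3) by blast
  then show False
    using min j by (auto simp: coord_minimal_def)
qed

lemma search_pareto_point_correct:
  assumes "feasibility N k f" "x \<in> vecs N k" "f x"
  shows "search_pareto_point x k f \<in> pareto_points N k f"
    and "vle (search_pareto_point x k f) x"
  using foldl_search_step_correct[OF assms order_refl]
    coord_minimal_imp_pareto_point[OF assms(1)]
  unfolding search_pareto_point_def by auto

section \<open>Updating S\<close>

definition update_candidates :: "nat \<Rightarrow> nat list \<Rightarrow> nat list set \<Rightarrow> nat list set" where
  "update_candidates k x S = {y\<in>S. \<not> vle x y}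
     \<union> {y[i := x ! i - 1] | y i. y \<in> S \<and> vle x y \<and> i < k \<and> x ! i > 0}"

lemma update_S_eq_maximal_candidates:
  "update_S k x S = {y\<in>update_candidates k x S. \<not> (\<exists>z\<in>update_candidates k x S. smaller y z)}"
  by (simp add: update_S_def update_candidates_def Let_def)

lemma mem_update_S_cases:
  assumes "y \<in> update_S k x S"
  obtains "y \<in> S" "\<not> vle x y"
  | z i where "y = z[i := x ! i - 1]" "z \<in> S" "vle x z" "i < k" "0 < x ! i"
  using assms by (auto simp: update_S_eq_maximal_candidates update_candidates_def)

lemma update_candidates_subset_vecs:
  assumes "S \<subseteq> vecs N k" "x \<in> vecs N k"
  shows "update_candidates k x S \<subseteq> vecs N k"
proof
  fix y assume "y \<in> update_candidates k x S"
  then consider "y \<in> S" | z i where "y = z[i := x ! i - 1]" "z \<in> S" "i < k"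
    unfolding update_candidates_def by blast
  then show "y \<in> vecs N k"
  proof cases
    case (2 z i)
    then have "x ! i - 1 \<le> N"
      using assms(2) by (auto simp: mem_vecs_iff)
    then show ?thesis
      using list_update_mem_vecs 2 assms(1) by blast
  qed (use assms in blast)
qed

lemma update_S_subset_vecs:
  "S \<subseteq> vecs N k \<Longrightarrow> x \<in> vecs N k \<Longrightarrow> update_S k x S \<subseteq> vecs N k"
  using update_candidates_subset_vecs unfolding update_S_eq_maximal_candidates by blast

text \<open>The vectors of S above x are replaced by copies lowered just below x in one coordinate;
  a vector below some element of S but not above x stays below one of these.\<close>

lemma update_S_covers:
  assumes S: "S \<subseteq> vecs N k" and x: "x \<in> vecs N k"
    and v: "v \<in> vecs N k" "vle v y" "y \<in> S" "\<not> vle x v"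
  shows "\<exists>z\<in>update_S k x S. vle v z"
proof -
  let ?C = "update_candidates k x S"
  have fin: "finite ?C"
    using update_candidates_subset_vecs[OF S x] finite_vecs finite_subset by blast
  have "\<exists>y'\<in>?C. vle v y'"
  proof (cases "vle x y")
    case False
    then show ?thesis using v by (auto simp: update_candidates_def)
  next
    case True
    have len: "length x = k" "length v = k"
      using x v by (auto simp: mem_vecs_iff)
    then obtain i where i: "i < k" "v ! i < x ! i"
      using v(4) by (auto simp: vle_iff not_le)
    then have "0 < x ! i"
      by simp
    then have "y[i := x ! i - 1] \<in> ?C"
      using v(3) True i(1) unfolding update_candidates_def by blast
    moreover have "vle v (y[i := x ! i - 1])"
      using v(2) i len by (auto simp: vle_iff nth_list_update)
    ultimately show ?thesis by blast
  qed
  then obtain y' where y': "y' \<in> ?C" "vle v y'" by blast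
  then obtain z where "z \<in> ?C" "vle y' z" "\<not> (\<exists>w\<in>?C. smaller z w)"
    using finite_has_maximal_above[OF fin] by blast
  then show ?thesis
    using vle_trans[OF y'(2)] unfolding update_S_eq_maximal_candidates by blast
qed

section \<open>The main loop\<close>

definition pe_invariant :: "nat \<Rightarrow> nat \<Rightarrow> (nat list \<Rightarrow> bool) \<Rightarrow>
    nat list set \<times> nat list set \<Rightarrow> bool" where
  "pe_invariant N k f st \<longleftrightarrow> fst st \<subseteq> vecs N k \<and> snd st \<subseteq> pareto_points N k f
     \<and> (\<forall>y\<in>fst st. \<forall>p\<in>snd st. \<not> vle p y)
     \<and> (\<forall>v\<in>vecs N k. f v \<longrightarrow> (\<exists>p\<in>snd st. vle p v) \<or> (\<exists>y\<in>fst st. vle v y))"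

text \<open>Lexicographic in the number of Pareto points not yet found and the size of S.\<close>

definition pe_measure :: "nat \<Rightarrow> nat \<Rightarrow> (nat list \<Rightarrow> bool) \<Rightarrow>
    nat list set \<times> nat list set \<Rightarrow> nat" where
  "pe_measure N k f st =
     card (pareto_points N k f - snd st) * (card (vecs N k) + 1) + card (fst st)"

lemma pe_invariant_init: "pe_invariant N k f (pe_init N k)"
  by (auto simp: pe_invariant_def pe_init_def mem_vecs_iff vle_iff)

lemma pe_stepE:
  assumes "pe_step k f (S, P) st'"
  obtains x where "x \<in> S" "f x"
      "st' = (update_S k (search_pareto_point x k f) S, insert (search_pareto_point x k f) P)"
  | x where "x \<in> S" "\<not> f x" "st' = (S - {x}, P)"
  using assms by (auto simp: pe_step_def Let_def)

lemma pe_invariant_update: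
  assumes inv: "pe_invariant N k f (S, P)" and x: "x \<in> pareto_points N k f"
  shows "pe_invariant N k f (update_S k x S, insert x P)"
proof -
  have S: "S \<subseteq> vecs N k" and P: "P \<subseteq> pareto_points N k f"
    and sep: "\<forall>y\<in>S. \<forall>p\<in>P. \<not> vle p y"
    and cov: "\<forall>v\<in>vecs N k. f v \<longrightarrow> (\<exists>p\<in>P. vle p v) \<or> (\<exists>y\<in>S. vle v y)"
    using inv by (auto simp: pe_invariant_def)
  have xv: "x \<in> vecs N k"
    using x by (simp add: pareto_points_def)
  have "\<not> vle p y" if y: "y \<in> update_S k x S" and p: "p \<in> insert x P" for y p
    using y
  proof (cases rule: mem_update_S_cases)
    case 1
    then show ?thesis using sep p by blast
  next
    case (2 z i)
    have "length z = k" "length x = k"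
      using 2 S xv by (auto simp: mem_vecs_iff)
    then have "x ! i \<le> z ! i" and yi: "y ! i = x ! i - 1"
      using 2 by (auto simp: vle_iff)
    then have "vle y z"
      using list_update_vle[of "x ! i - 1" z i] 2(1) by simp
    moreover have "\<not> vle x y"
      using yi 2(4,5) \<open>length x = k\<close> by (auto simp: vle_iff)
    ultimately show ?thesis
      using p sep 2(2) vle_trans by blast
  qed
  moreover have "(\<exists>p\<in>insert x P. vle p v) \<or> (\<exists>y\<in>update_S k x S. vle v y)"
    if "v \<in> vecs N k" "f v" for v
    using cov update_S_covers[OF S xv that(1)] that by blast
  ultimately show ?thesis
    using update_S_subset_vecs[OF S xv] P x by (simp add: pe_invariant_def)
qed

lemma pe_invariant_discard:
  assumes feas: "feasibility N k f" and inv: "pe_invariant N k f (S, P)"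
    and x: "x \<in> S" "\<not> f x"
  shows "pe_invariant N k f (S - {x}, P)"
proof -
  have S: "S \<subseteq> vecs N k" and P: "P \<subseteq> pareto_points N k f"
    and sep: "\<forall>y\<in>S. \<forall>p\<in>P. \<not> vle p y"
    and cov: "\<forall>v\<in>vecs N k. f v \<longrightarrow> (\<exists>p\<in>P. vle p v) \<or> (\<exists>y\<in>S. vle v y)"
    using inv by (auto simp: pe_invariant_def)
  have "\<not> vle v x" if "v \<in> vecs N k" "f v" for v
    using feasibility_vle[OF feas that(1)] S x that(2) by blast
  then have "\<forall>v\<in>vecs N k. f v \<longrightarrow> (\<exists>p\<in>P. vle p v) \<or> (\<exists>y\<in>S - {x}. vle v y)"
    using cov by blast
  then show ?thesis
    using S P sep by (auto simp: pe_invariant_def)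
qed

lemma pe_measure_update_less:
  assumes inv: "pe_invariant N k f (S, P)"
    and x: "x \<in> pareto_points N k f" "x \<notin> P"
  shows "pe_measure N k f (update_S k x S, insert x P) < pe_measure N k f (S, P)"
proof -
  let ?M = "card (vecs N k)" and ?c = "card (pareto_points N k f - insert x P)"
  have "pareto_points N k f \<subseteq> vecs N k"
    by (auto simp: pareto_points_def)
  then have "finite (pareto_points N k f - insert x P)"
    using finite_vecs finite_subset by blast
  then have "card (insert x (pareto_points N k f - insert x P)) = Suc ?c"
    by (rule card_insert_disjoint) blast
  moreover have "pareto_points N k f - P = insert x (pareto_points N k f - insert x P)"
    using x by blast
  ultimately have c: "card (pareto_points N k f - P) = Suc ?c"
    by (simp only:)
  have "update_S k x S \<subseteq> vecs N k"
    using inv x by (intro update_S_subset_vecs) (auto simp: pe_invariant_def pareto_points_def)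
  then have "card (update_S k x S) \<le> ?M"
    by (rule card_mono[OF finite_vecs])
  then have "pe_measure N k f (update_S k x S, insert x P) < ?c * (?M + 1) + (?M + 1)"
    by (simp add: pe_measure_def)
  also have "\<dots> \<le> pe_measure N k f (S, P)"
    by (simp add: pe_measure_def c)
  finally show ?thesis .
qed

lemma pe_measure_discard_less:
  assumes "S \<subseteq> vecs N k" "x \<in> S"
  shows "pe_measure N k f (S - {x}, P) < pe_measure N k f (S, P)"
proof -
  have "finite S"
    using assms(1) finite_vecs finite_subset by blast
  then have "card (S - {x}) < card S"
    using assms(2) by (rule card_Diff1_less)
  then show ?thesis
    unfolding pe_measure_def by simp
qed

lemma pe_step_invariant_measure:
  assumes feas: "feasibility N k f" and inv: "pe_invariant N k f st" and step: "pe_step k f st st'"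
  shows "pe_invariant N k f st' \<and> pe_measure N k f st' < pe_measure N k f st"
proof -
  obtain S P where st: "st = (S, P)" by fastforce
  have inv': "pe_invariant N k f (S, P)"
    using inv by (simp add: st)
  have S: "S \<subseteq> vecs N k" and sep: "\<forall>y\<in>S. \<forall>p\<in>P. \<not> vle p y"
    using inv' by (auto simp: pe_invariant_def)
  from step[unfolded st] show ?thesis
  proof (cases rule: pe_stepE)
    case (1 x)
    define x' where "x' = search_pareto_point x k f"
    have x': "x' \<in> pareto_points N k f" "vle x' x"
      unfolding x'_def using search_pareto_point_correct[OF feas _ \<open>f x\<close>] 1(1) S by blast+
    then have "x' \<notin> P"
      using sep 1(1) by blast
    then show ?thesis
      using pe_invariant_update[OF inv' x'(1)] pe_measure_update_less[OF inv' x'(1)]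
      unfolding st 1(3) x'_def[symmetric] by simp
  next
    case (2 x)
    then show ?thesis
      using pe_invariant_discard[OF feas inv'] pe_measure_discard_less[OF S] unfolding st by simp
  qed
qed

lemma pe_invariant_empty_imp_pareto_points:
  assumes inv: "pe_invariant N k f ({}, P)"
  shows "P = pareto_points N k f"
proof
  show "P \<subseteq> pareto_points N k f"
    using inv by (simp add: pe_invariant_def)
  show "pareto_points N k f \<subseteq> P"
  proof
    fix v assume v: "v \<in> pareto_points N k f"
    then obtain p where p: "p \<in> P" "vle p v"
      using inv by (auto simp: pe_invariant_def pareto_points_def)
    then have "p \<in> vecs N k" "f p"
      using inv by (auto simp: pe_invariant_def pareto_points_def)
    then have "\<not> smaller p v"
      using v by (auto simp: pareto_points_def)
    then show "v \<in> P"
      using p by (auto simp: smaller_def)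
  qed
qed

theorem corollary1:
  fixes N k :: nat and f :: "nat list \<Rightarrow> bool"
  assumes "k \<ge> 1"
    and "feasibility N k f"
  shows "\<not> (\<exists>r. r 0 = pe_init N k \<and> (\<forall>n. pe_step k f (r n) (r (Suc n))))
         \<and> (\<forall>S P. (pe_step k f)\<^sup>*\<^sup>* (pe_init N k) (S, P) \<and> S = {}
               \<longrightarrow> P = pareto_points N k f)"
proof (intro conjI allI impI notI)
  note step = pe_step_invariant_measure[OF assms(2)]
  show False if "\<exists>r. r 0 = pe_init N k \<and> (\<forall>n. pe_step k f (r n) (r (Suc n)))"
  proof -
    from that obtain r where r0: "r 0 = pe_init N k" and chain: "\<forall>n. pe_step k f (r n) (r (Suc n))"
      by blast
    have "pe_invariant N k f (r 0)"
      unfolding r0 by (rule pe_invariant_init)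
    from step this chain show False
      by (rule no_infinite_chain_if_measure_decreases)
  qed
  fix S P
  assume "(pe_step k f)\<^sup>*\<^sup>* (pe_init N k) (S, P) \<and> S = {}"
  then have "pe_invariant N k f ({}, P)"
    using reachable_invariant[of "pe_invariant N k f", OF _ pe_invariant_init] step by blast
  then show "P = pareto_points N k f"
    by (rule pe_invariant_empty_imp_pareto_points)
qed

end
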